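(* Let $\varphi:S^1\to S^1$ be a minimal orientation preserving circle homeomorphism with irrational rotation number $\varrho$, and fix $\varepsilon>0$. Then there exists a neighbourhood $U$ of $\varphi$ in $C^0(S^1)$ such that for every minimal orientation preserving circle homeomorphism $\tilde\varphi\in U$ with $\varrho(\tilde\varphi)=\varrho$ we have $$\sup_{x_0\in\mathbb{R}}\sup_{n\in\mathbb{N}}|r_n(x_0)-\tilde r_n(x_0)|<\varepsilon,$$ where $r_n(x_0)=\frac12|\mathrm{cosec}(\pi(\Phi^n(x_0)-\Phi^{n-1}(x_0)))|$ and $\tilde r_n(x_0)=\frac12|\mathrm{cosec}(\pi(\tilde\Phi^n(x_0)-\tilde\Phi^{n-1}(x_0)))|$ are the local discrete radii of curvature of the curlicues generated at $x_0$ by lifts $\Phi$ of $\varphi$ and $\tilde\Phi$ of $\tilde\varphi$, respectively.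
   Context: Identify $S^1=\mathbb{R}/\mathbb{Z}$ via $x\mapsto\exp(2\pi\imath x)$; a lift is $\Phi$ with $\Phi(x+1)=\Phi(x)+1$ projecting to the homeomorphism. The curlicue generated at $x_0$ has vertices $z_0=0$, $z_n=\sum_{k=0}^{n-1}\exp(2\pi\imath\Phi^k(x_0))$; its local discrete radius of curvature $r_n$ is the radius of the circle through $z_{n-1},z_n,z_{n+1}$, which equals the formula above and does not depend on the choice of lift. $C^0(S^1)$ carries the uniform topology. *)

theory Defs
  imports "HOL-Analysis.Analysis"
begin

text \<open>We identify S^1 with R/Z. An orientation preserving circle homeomorphism is
represented by a lift: a continuous strictly increasing map Phi : R -> R with
Phi (x + 1) = Phi x + 1 (every such map projects to an orientation preserving
homeomorphism of S^1, and every such homeomorphism has such lifts).\<close>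

definition circle_lift :: "(real \<Rightarrow> real) \<Rightarrow> bool" where
  "circle_lift \<Phi> \<longleftrightarrow> continuous_on UNIV \<Phi> \<and> strict_mono \<Phi> \<and> (\<forall>x. \<Phi> (x + 1) = \<Phi> x + 1)"

text \<open>Minimality: S^1 has no nonempty proper closed invariant subset. Closed subsets
of S^1 = R/Z correspond to closed 1-periodic subsets of R.\<close>

definition circle_minimal :: "(real \<Rightarrow> real) \<Rightarrow> bool" where
  "circle_minimal \<Phi> \<longleftrightarrow>
     (\<forall>A. closed A \<and> (\<forall>x. x \<in> A \<longleftrightarrow> x + 1 \<in> A) \<and> \<Phi> ` A = A \<longrightarrow> A = {} \<or> A = UNIV)"

text \<open>Rotation number of the lift (a real number; the rotation number of the circle
map is its class mod Z).\<close>

definition rot_num :: "(real \<Rightarrow> real) \<Rightarrow> real" where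
  "rot_num \<Phi> = lim (\<lambda>n. (\<Phi> ^^ n) 0 / real n)"

definition circ_dist :: "real \<Rightarrow> real \<Rightarrow> real" where
  "circ_dist a b = \<bar>(a - b) - of_int (round (a - b))\<bar>"

definition curv_radius :: "(real \<Rightarrow> real) \<Rightarrow> real \<Rightarrow> nat \<Rightarrow> real" where
  "curv_radius \<Phi> x0 n = 1/2 * \<bar>1 / sin (pi * ((\<Phi> ^^ n) x0 - (\<Phi> ^^ (n - 1)) x0))\<bar>"

end

(*
  Translating Psi by an integer, we may assume that it is uniformly close to Phi and has the
  same rotation number rho.  Since rho is irrational, the points Phi^n x + l of a lifted orbit
  are ordered like the points n rho + l, so the orbits of Phi and Psi are ordered alike.  By
  minimality and compactness there is an N such that the points Phi^i x + l with i <= N are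
  e-dense, uniformly in x; if Psi is close enough to Phi, its first N iterates stay within e of
  those of Phi, and trapping Phi^n x between two such points gives |Psi^n x - Phi^n x| < 2e for
  every n.  Finally r_n is the function t |-> 1/2 |cosec (pi t)| of the displacement
  t = Phi (Phi^(n-1) x) - Phi^(n-1) x, which ranges over a compact subinterval of
  (floor rho, floor rho + 1), where this function is uniformly continuous.
*)

theory Submission
  imports Defs
begin

lemma Cauchy_if_dist_le_inverse_sum:
  fixes X :: "nat \<Rightarrow> 'a::metric_space"
  assumes "\<And>m n. m \<ge> 1 \<Longrightarrow> n \<ge> 1 \<Longrightarrow> dist (X m) (X n) \<le> 1 / real m + 1 / real n"
  shows "Cauchy X"
proof (rule metric_CauchyI)
  fix e :: real
  assume "e > 0"
  obtain M :: nat where M: "2 / e < real M"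
    using reals_Archimedean2 by blast
  moreover have "0 < 2 / e"
    using \<open>e > 0\<close> by simp
  ultimately have "M \<ge> 1"
    by (cases M) auto
  have "2 / real M < e"
    using M \<open>e > 0\<close> \<open>M \<ge> 1\<close> by (simp add: field_simps)
  have "dist (X m) (X n) < e" if "m \<ge> M" "n \<ge> M" for m n
  proof -
    have "1 / real m \<le> 1 / real M" "1 / real n \<le> 1 / real M"
      using that \<open>M \<ge> 1\<close> by (auto simp: frac_le)
    then show ?thesis
      using assms[of m n] that \<open>M \<ge> 1\<close> \<open>2 / real M < e\<close> by simp
  qed
  then show "\<exists>M. \<forall>m\<ge>M. \<forall>n\<ge>M. dist (X m) (X n) < e" by blast
qed

lemma le_of_nat_mult_bounded:
  fixes a b C :: real
  assumes "\<And>k::nat. real k * a \<le> real k * b + C"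
  shows "a \<le> b"
proof (rule ccontr)
  assume "\<not> a \<le> b"
  obtain k :: nat where "C / (a - b) < real k"
    using reals_Archimedean2 by blast
  then have "C < real k * (a - b)"
    using \<open>\<not> a \<le> b\<close> by (simp add: field_simps)
  then show False
    using assms[of k] by (simp add: algebra_simps)
qed

lemma not_Ints_floor_bounds:
  fixes x :: real
  assumes "x \<notin> \<int>"
  shows "of_int \<lfloor>x\<rfloor> < x" and "x < of_int \<lfloor>x\<rfloor> + 1"
  using assms frac_gt_0_iff[of x] unfolding frac_def by linarith+

lemma continuous_nonvanishing_sign:
  fixes h :: "real \<Rightarrow> real"
  assumes cont: "\<And>x. isCont h x" and nonzero: "\<And>x. h x \<noteq> 0"
  shows "(\<forall>x. 0 < h x) \<or> (\<forall>x. h x < 0)"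
proof (rule ccontr)
  assume "\<not> ?thesis"
  then obtain a b where ab: "h a \<le> 0" "0 \<le> h b"
    by (auto simp: not_less)
  have "\<exists>x. h x = 0"
  proof (cases "a \<le> b")
    case True
    then show ?thesis using IVT[of h a 0 b] ab cont by blast
  next
    case False
    then show ?thesis using IVT2[of h a 0 b] ab cont by auto
  qed
  then show False
    using nonzero by blast
qed

lemma continuous_round_constant:
  fixes g :: "real \<Rightarrow> real"
  assumes cont: "\<And>x. isCont g x" and near: "\<And>x. \<bar>g x - of_int (round (g x))\<bar> < 1/2"
  shows "round (g x) = round (g y)"
proof -
  have "\<not> round (g a) < round (g b)" for a b
  proof
    assume less: "round (g a) < round (g b)"
    define c :: real where "c = of_int (round (g a)) + 1/2"
    have "g a < c" "c < g b"
      using near[of a] near[of b] less unfolding c_def by linarith+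
    then obtain z where "g z = c"
      using IVT[of g a c b] IVT2[of g a c b] cont by (cases "a \<le> b") (auto simp: less_imp_le)
    moreover have "round c = round (g a) + 1"
      unfolding c_def round_def by simp
    ultimately show False
      using near[of z] unfolding c_def by simp
  qed
  then show ?thesis
    by (meson linorder_neqE)
qed

lemma compact_subset_incseq_open:
  assumes "compact S" and "\<And>N. open (U N)" and mono: "\<And>m n. m \<le> n \<Longrightarrow> U m \<subseteq> U n"
    and "S \<subseteq> (\<Union>N. U N)"
  shows "\<exists>N::nat. S \<subseteq> U N"
proof -
  obtain C where C: "finite C" "S \<subseteq> (\<Union>N\<in>C. U N)"
    by (rule compactE_image[OF assms(1), of UNIV U]) (use assms(2,4) in auto)
  define M where "M = Max (insert 0 C)"
  have "U N \<subseteq> U M" if "N \<in> C" for N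
    using mono[of N M] C(1) that unfolding M_def by simp
  then have "S \<subseteq> U M"
    using C(2) by blast
  then show ?thesis ..
qed

lemma abs_sin_pi_diff_int: "\<bar>sin (pi * (t - of_int k))\<bar> = \<bar>sin (pi * t)\<bar>"
proof -
  have "\<bar>cos (pi * of_int k)\<bar> = 1"
    using sin_cos_squared_add[of "pi * of_int k"] by (simp add: abs_square_eq_1)
  then show ?thesis
    by (simp add: right_diff_distrib sin_diff abs_mult)
qed

lemma uniformly_continuous_on_half_abs_cosec:
  assumes "of_int p < a" and "b < of_int p + 1"
  shows "uniformly_continuous_on {a..b} (\<lambda>t. 1/2 * \<bar>1 / sin (pi * t)\<bar>)"
proof (rule compact_uniformly_continuous)
  have "sin (pi * t) \<noteq> 0" if "t \<in> {a..b}" for t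
  proof
    assume "sin (pi * t) = 0"
    then obtain i :: int where "t = of_int i"
      by (auto simp: sin_zero_iff_int2)
    then have "of_int p < (of_int i :: real)" "(of_int i :: real) < of_int (p + 1)"
      using that assms by auto
    then have "p < i" "i < p + 1"
      by (simp_all only: of_int_less_iff)
    then show False
      by linarith
  qed
  then show "continuous_on {a..b} (\<lambda>t. 1/2 * \<bar>1 / sin (pi * t)\<bar>)"
    by (intro continuous_intros) auto
qed simp

lemma circle_lift_isCont: "circle_lift F \<Longrightarrow> isCont F x"
  unfolding circle_lift_def by (simp add: continuous_on_eq_continuous_at)

lemma circle_lift_strict_mono: "circle_lift F \<Longrightarrow> strict_mono F"
  unfolding circle_lift_def by simp

lemma circle_lift_add_int:
  assumes "circle_lift F"
  shows "F (x + of_int k) = F x + of_int k"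
proof (induction k rule: int_induct[where k = 0])
  case base
  show ?case by simp
next
  case (step1 i)
  have "F (x + of_int (i + 1)) = F ((x + of_int i) + 1)" by (simp add: add.assoc)
  then show ?case using assms step1 unfolding circle_lift_def by simp
next
  case (step2 i)
  have "F (x + of_int i) = F ((x + of_int (i - 1)) + 1)" by simp
  also have "\<dots> = F (x + of_int (i - 1)) + 1"
    using assms unfolding circle_lift_def by blast
  finally show ?case using step2 by simp
qed

lemma circle_lift_diff_int: "circle_lift F \<Longrightarrow> F (x - of_int k) = F x - of_int k"
  using circle_lift_add_int[of F x "- k"] by simp

lemma circle_lift_funpow: "circle_lift F \<Longrightarrow> circle_lift (F ^^ n)"
proof (induction n)
  case 0
  show ?case unfolding circle_lift_def by (simp add: strict_mono_def)
next
  case (Suc n)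
  then show ?case
    unfolding circle_lift_def by (auto intro: continuous_on_compose2 strict_mono_o)
qed

lemma circle_lift_minus_int:
  assumes "circle_lift F"
  shows "circle_lift (\<lambda>x. F x - of_int k)"
  using assms unfolding circle_lift_def strict_mono_def by (auto intro: continuous_on_diff)

lemma funpow_minus_int:
  assumes "circle_lift F"
  shows "((\<lambda>x. F x - of_int k) ^^ n) x = (F ^^ n) x - real n * of_int k"
proof (induction n)
  case 0
  show ?case by simp
next
  case (Suc n)
  have "((\<lambda>x. F x - of_int k) ^^ Suc n) x = F ((F ^^ n) x - of_int (int n * k)) - of_int k"
    using Suc.IH by simp
  then show ?case
    unfolding circle_lift_diff_int[OF assms] by (simp add: algebra_simps)
qed

lemma circle_lift_displacement_diff:
  assumes F: "circle_lift F"
  shows "\<bar>(F x - x) - (F y - y)\<bar> < 1"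
proof -
  define x' where "x' = x - of_int \<lfloor>x - y\<rfloor>"
  have x': "y \<le> x'" "x' < y + 1"
    unfolding x'_def by linarith+
  have "F x - x = F x' - x'"
    unfolding x'_def circle_lift_diff_int[OF F] by simp
  moreover have "F y \<le> F x'" "F x' < F y + 1"
    using strict_mono_leD[OF circle_lift_strict_mono[OF F] x'(1)]
      strict_monoD[OF circle_lift_strict_mono[OF F] x'(2)] F
    unfolding circle_lift_def by auto
  ultimately show ?thesis using x' by linarith
qed

lemma circle_lift_surj:
  assumes F: "circle_lift F"
  shows "\<exists>x. F x = y"
proof -
  define k where "k = \<lfloor>y - F 0\<rfloor>"
  have "F (of_int k) \<le> y" "y \<le> F (of_int (k + 1))"
    using circle_lift_add_int[OF F, of 0 k] circle_lift_add_int[OF F, of 0 "k + 1"]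
    unfolding k_def by simp_all linarith+
  then show ?thesis
    using IVT[of F "of_int k" y "of_int (k + 1)"] circle_lift_isCont[OF F] by auto
qed

lemma circle_lift_uniformly_continuous:
  assumes F: "circle_lift F"
  shows "uniformly_continuous_on UNIV F"
  unfolding uniformly_continuous_on_def
proof (intro allI impI)
  fix e :: real
  assume "e > 0"
  have "uniformly_continuous_on {-1..2} F"
    using F unfolding circle_lift_def by (auto intro: compact_uniformly_continuous continuous_on_subset)
  then obtain d where "d > 0"
    and d: "\<And>x x'. x \<in> {-1..2} \<Longrightarrow> x' \<in> {-1..2} \<Longrightarrow> dist x' x < d \<Longrightarrow> dist (F x') (F x) < e"
    using \<open>e > 0\<close> unfolding uniformly_continuous_on_def by metis
  have "dist (F b) (F a) < e" if "dist b a < min d 1" for a b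
  proof -
    define k where "k = \<lfloor>a\<rfloor>"
    have "a - of_int k \<in> {-1..2}" "b - of_int k \<in> {-1..2}" "dist (b - of_int k) (a - of_int k) < d"
      using that unfolding k_def dist_real_def by auto linarith+
    then have "dist (F (b - of_int k)) (F (a - of_int k)) < e"
      using d by blast
    then show ?thesis
      unfolding circle_lift_diff_int[OF F] dist_real_def by simp
  qed
  then show "\<exists>d>0. \<forall>a\<in>UNIV. \<forall>b\<in>UNIV. dist b a < d \<longrightarrow> dist (F b) (F a) < e"
    using \<open>d > 0\<close> by (metis min_less_iff_conj zero_less_one)
qed

section \<open>Rotation numbers\<close>

text \<open>The rotation number in quantitative form: for a circle lift exactly one \<open>\<rho>\<close> has this
  property, namely \<open>rot_num F\<close>.\<close>

definition is_rot_num :: "(real \<Rightarrow> real) \<Rightarrow> real \<Rightarrow> bool" where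
  "is_rot_num F \<rho> \<longleftrightarrow> (\<forall>n. \<bar>(F ^^ n) 0 - real n * \<rho>\<bar> \<le> 1)"

lemma circle_lift_funpow_mult_bound:
  assumes F: "circle_lift F"
  shows "\<bar>(F ^^ (n * k)) 0 - real k * (F ^^ n) 0\<bar> \<le> real k"
proof (induction k)
  case 0
  show ?case by simp
next
  case (Suc k)
  have "(F ^^ (n * Suc k)) 0 = (F ^^ n) ((F ^^ (n * k)) 0)"
    by (simp only: mult_Suc_right funpow_add o_apply)
  moreover have "\<bar>((F ^^ n) ((F ^^ (n * k)) 0) - (F ^^ (n * k)) 0) - ((F ^^ n) 0 - 0)\<bar> < 1"
    using circle_lift_displacement_diff[OF circle_lift_funpow[OF F]] .
  ultimately show ?case using Suc.IH by (simp add: algebra_simps)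
qed

lemma is_rot_num_rot_num:
  assumes F: "circle_lift F"
  shows "is_rot_num F (rot_num F)"
proof -
  define X where "X n = (F ^^ n) 0 / real n" for n
  have X_mult: "\<bar>X (n * m) - X n\<bar> \<le> 1 / real n" if "n \<ge> 1" "m \<ge> 1" for n m
  proof -
    have "\<bar>X (n * m) - X n\<bar> = \<bar>(F ^^ (n * m)) 0 - real m * (F ^^ n) 0\<bar> / real (n * m)"
      using that unfolding X_def by (simp add: field_simps)
    also have "\<dots> \<le> real m / real (n * m)"
      using circle_lift_funpow_mult_bound[OF F, of n m] by (rule divide_right_mono) simp
    also have "\<dots> = 1 / real n"
      using that by simp
    finally show ?thesis .
  qed
  have X_close: "\<bar>X m - X n\<bar> \<le> 1 / real m + 1 / real n" if "m \<ge> 1" "n \<ge> 1" for m n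
    using X_mult[OF that] X_mult[OF that(2,1)] by (simp add: mult.commute)
  have "Cauchy X"
    using X_close by (intro Cauchy_if_dist_le_inverse_sum) (simp add: dist_real_def)
  then have "X \<longlonglongrightarrow> rot_num F"
    unfolding rot_num_def X_def[symmetric] by (simp add: Cauchy_convergent_iff convergent_LIMSEQ_iff)
  have bound: "\<bar>(F ^^ n) 0 - real n * rot_num F\<bar> \<le> 1" if "n \<ge> 1" for n
  proof -
    have "(\<lambda>m. \<bar>X m - X n\<bar>) \<longlonglongrightarrow> \<bar>rot_num F - X n\<bar>"
      by (intro tendsto_intros \<open>X \<longlonglongrightarrow> rot_num F\<close>)
    moreover have "(\<lambda>m. 1 / real m + 1 / real n) \<longlonglongrightarrow> 0 + 1 / real n"
      by (intro tendsto_intros lim_1_over_n)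
    moreover have "\<forall>\<^sub>F m in sequentially. \<bar>X m - X n\<bar> \<le> 1 / real m + 1 / real n"
      using eventually_ge_at_top[of 1] by eventually_elim (use X_close that in blast)
    ultimately have "\<bar>rot_num F - X n\<bar> \<le> 1 / real n"
      using tendsto_le[OF sequentially_bot] by fastforce
    then show ?thesis
      using that unfolding X_def by (simp add: abs_minus_commute field_simps)
  qed
  show ?thesis
    unfolding is_rot_num_def
  proof
    fix n
    show "\<bar>(F ^^ n) 0 - real n * rot_num F\<bar> \<le> 1"
      using bound[of n] by (cases "n = 0") simp_all
  qed
qed

lemma is_rot_num_funpow:
  assumes "is_rot_num F \<rho>"
  shows "is_rot_num (F ^^ q) (real q * \<rho>)"
  unfolding is_rot_num_def
proof
  fix k
  have "\<bar>(F ^^ (q * k)) 0 - real (q * k) * \<rho>\<bar> \<le> 1"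
    using assms unfolding is_rot_num_def by blast
  then show "\<bar>((F ^^ q) ^^ k) 0 - real k * (real q * \<rho>)\<bar> \<le> 1"
    by (simp add: funpow_mult ac_simps)
qed

lemma is_rot_num_minus_int:
  assumes "circle_lift F" and "is_rot_num F \<rho>"
  shows "is_rot_num (\<lambda>x. F x - of_int k) (\<rho> - of_int k)"
  using assms(2) unfolding is_rot_num_def funpow_minus_int[OF assms(1)] by (simp add: algebra_simps)

lemma is_rot_num_ge:
  assumes "is_rot_num G \<sigma>" and "\<And>y. y + c \<le> G y"
  shows "c \<le> \<sigma>"
proof (rule le_of_nat_mult_bounded)
  fix k :: nat
  have "real k * c \<le> (G ^^ k) 0"
  proof (induction k)
    case (Suc k)
    then show ?case using assms(2)[of "(G ^^ k) 0"] by (simp add: algebra_simps)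
  qed simp
  moreover have "\<bar>(G ^^ k) 0 - real k * \<sigma>\<bar> \<le> 1"
    using assms(1) unfolding is_rot_num_def by blast
  ultimately show "real k * c \<le> real k * \<sigma> + 1"
    by linarith
qed

lemma is_rot_num_le:
  assumes "is_rot_num G \<sigma>" and "\<And>y. G y \<le> y + c"
  shows "\<sigma> \<le> c"
proof (rule le_of_nat_mult_bounded)
  fix k :: nat
  have "(G ^^ k) 0 \<le> real k * c"
  proof (induction k)
    case (Suc k)
    then show ?case using assms(2)[of "(G ^^ k) 0"] by (simp add: algebra_simps)
  qed simp
  moreover have "\<bar>(G ^^ k) 0 - real k * \<sigma>\<bar> \<le> 1"
    using assms(1) unfolding is_rot_num_def by blast
  ultimately show "real k * \<sigma> \<le> real k * c + 1"
    by linarith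
qed

lemma is_rot_num_eq_of_int_diff:
  assumes "is_rot_num G \<sigma>" and "\<sigma> - \<rho> \<in> \<int>" and "of_int p < \<rho>" "\<rho> < of_int p + 1"
    and "\<And>y. of_int p \<le> G y - y" "\<And>y. G y - y \<le> of_int p + 1"
  shows "\<sigma> = \<rho>"
proof -
  have "of_int p \<le> \<sigma>" "\<sigma> \<le> of_int p + 1"
    using is_rot_num_ge[OF assms(1), of "of_int p"] is_rot_num_le[OF assms(1), of "of_int p + 1"] assms(5,6)
    by (simp_all add: algebra_simps)
  moreover obtain j where "\<sigma> - \<rho> = of_int j"
    using assms(2) Ints_cases by blast
  ultimately have "of_int (- 1) < (of_int j :: real)" "(of_int j :: real) < of_int 1"
    using assms(3,4) by auto
  then have "- 1 < j" "j < 1"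
    by (simp_all only: of_int_less_iff)
  then have "j = 0"
    by linarith
  then show ?thesis
    using \<open>\<sigma> - \<rho> = of_int j\<close> by simp
qed

lemma is_rot_num_eq_of_translated_fixpoint:
  assumes G: "circle_lift G" and \<sigma>: "is_rot_num G \<sigma>" and fixpt: "G y = y + of_int p"
  shows "\<sigma> = of_int p"
proof -
  have iter: "(G ^^ k) y = y + real k * of_int p" for k
  proof (induction k)
    case (Suc k)
    then show ?case
      using circle_lift_add_int[OF G, of y "int k * p"] fixpt by (simp add: algebra_simps)
  qed simp
  have near_p: "\<bar>(G ^^ k) 0 - real k * of_int p\<bar> < 1" for k
    using circle_lift_displacement_diff[OF circle_lift_funpow[OF G], of k y 0] iter[of k] by simp
  have near_\<sigma>: "\<bar>(G ^^ k) 0 - real k * \<sigma>\<bar> \<le> 1" for k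
    using \<sigma> unfolding is_rot_num_def by blast
  have "real k * \<sigma> \<le> real k * of_int p + 2" "real k * of_int p \<le> real k * \<sigma> + 2" for k
    using near_p[of k] near_\<sigma>[of k] by (auto simp: abs_le_iff abs_less_iff)
  then show ?thesis
    using le_of_nat_mult_bounded by (metis antisym)
qed

lemma circle_lift_displacement_cases:
  assumes G: "circle_lift G" and \<sigma>: "is_rot_num G \<sigma>" and "\<sigma> \<noteq> of_int p"
  shows "(\<forall>y. y + of_int p < G y) \<or> (\<forall>y. G y < y + of_int p)"
proof -
  have "G y - y - of_int p \<noteq> 0" for y
    using is_rot_num_eq_of_translated_fixpoint[OF G \<sigma>, of y p] assms(3) by auto
  moreover have "isCont (\<lambda>y. G y - y - of_int p) x" for x
    by (intro continuous_intros circle_lift_isCont[OF G])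
  ultimately have "(\<forall>y. 0 < G y - y - of_int p) \<or> (\<forall>y. G y - y - of_int p < 0)"
    by (intro continuous_nonvanishing_sign)
  then show ?thesis
    by (auto simp: algebra_simps)
qed

lemma circle_lift_displacement_gt:
  assumes "circle_lift G" and "is_rot_num G \<sigma>" and "of_int p < \<sigma>"
  shows "y + of_int p < G y"
proof (rule ccontr)
  assume "\<not> y + of_int p < G y"
  then have "G z < z + of_int p" for z
    using circle_lift_displacement_cases[OF assms(1,2), of p] assms(3) by auto
  then have "\<sigma> \<le> of_int p"
    using is_rot_num_le[OF assms(2)] less_imp_le by metis
  then show False
    using assms(3) by simp
qed

lemma circle_lift_displacement_lt:
  assumes "circle_lift G" and "is_rot_num G \<sigma>" and "\<sigma> < of_int p"
  shows "G y < y + of_int p"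
proof (rule ccontr)
  assume "\<not> G y < y + of_int p"
  then have "z + of_int p < G z" for z
    using circle_lift_displacement_cases[OF assms(1,2), of p] assms(3) by auto
  then have "of_int p \<le> \<sigma>"
    using is_rot_num_ge[OF assms(2)] less_imp_le by metis
  then show False
    using assms(3) by simp
qed

lemma circle_lift_displacement_bounds:
  assumes F: "circle_lift F" and \<rho>: "is_rot_num F \<rho>"
    and "of_int p < \<rho>" and "\<rho> < of_int p + 1"
  shows "\<exists>\<eta>>0. \<forall>y. of_int p + \<eta> \<le> F y - y \<and> F y - y \<le> of_int p + 1 - \<eta>"
proof -
  have "of_int p < \<rho>" "\<rho> < of_int (p + 1)"
    using assms(3,4) by simp_all
  then have disp: "of_int p < F y - y" "F y - y < of_int p + 1" for y
    using circle_lift_displacement_gt[OF F \<rho>, of p y] circle_lift_displacement_lt[OF F \<rho>, of "p + 1" y]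
    by simp_all
  define D where "D y = F y - y" for y
  have "continuous_on {0..1} D"
    unfolding D_def using F unfolding circle_lift_def by (auto intro!: continuous_intros intro: continuous_on_subset)
  then obtain ymin ymax where "\<forall>y\<in>{0..1}. D ymin \<le> D y" "\<forall>y\<in>{0..1}. D y \<le> D ymax"
    using continuous_attains_inf[of "{0..1}" D] continuous_attains_sup[of "{0..1}" D] by auto
  moreover have "D y = D (y - of_int \<lfloor>y\<rfloor>)" "y - of_int \<lfloor>y\<rfloor> \<in> {0..1}" for y
    unfolding D_def circle_lift_diff_int[OF F] by simp_all linarith
  ultimately have "D ymin \<le> D y" "D y \<le> D ymax" for y
    by metis+
  define \<eta> where "\<eta> = min (D ymin - of_int p) (of_int p + 1 - D ymax)"
  have "\<eta> > 0"
    using disp[of ymin] disp[of ymax] unfolding \<eta>_def D_def by simp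
  moreover have "of_int p + \<eta> \<le> D y" "D y \<le> of_int p + 1 - \<eta>" for y
    using \<open>D ymin \<le> D y\<close> \<open>D y \<le> D ymax\<close> unfolding \<eta>_def by linarith+
  ultimately show ?thesis
    unfolding D_def by blast
qed

lemma funpow_order_eq_rotation_order:
  assumes F: "circle_lift F" and \<rho>: "is_rot_num F \<rho>" and irr: "\<rho> \<notin> \<rat>"
  shows "(F ^^ n) x < (F ^^ i) x + of_int l \<longleftrightarrow> real n * \<rho> < real i * \<rho> + of_int l"
proof -
  have Fq: "circle_lift (F ^^ q)" "is_rot_num (F ^^ q) (real q * \<rho>)" for q
    using circle_lift_funpow[OF F] is_rot_num_funpow[OF \<rho>] by blast+
  have ne: "real q * \<rho> \<noteq> of_int j" if "q > 0" for q j
  proof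
    assume "real q * \<rho> = of_int j"
    then have "\<rho> = of_int j / of_nat q"
      using that by (simp add: field_simps)
    then show False
      using irr by simp
  qed
  consider "n = i" | q where "q > 0" "n = q + i" | q where "q > 0" "i = q + n"
  proof (cases n i rule: linorder_cases)
    case less
    then show thesis using that(3)[of "i - n"] by simp
  next
    case greater
    then show thesis using that(2)[of "n - i"] by simp
  qed (use that(1) in blast)
  then show ?thesis
  proof cases
    case 1
    then show ?thesis by simp
  next
    case (2 q)
    then have "(F ^^ n) x = (F ^^ q) ((F ^^ i) x)"
      by (simp add: funpow_add)
    then show ?thesis
      using circle_lift_displacement_gt[OF Fq[of q], of l "(F ^^ i) x"]
        circle_lift_displacement_lt[OF Fq[of q], of l "(F ^^ i) x"] ne[OF 2(1), of l] 2(2)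
      by (cases "real q * \<rho> < of_int l") (auto simp: algebra_simps)
  next
    case (3 q)
    then have "(F ^^ i) x = (F ^^ q) ((F ^^ n) x)"
      by (simp add: funpow_add)
    then show ?thesis
      using circle_lift_displacement_gt[OF Fq[of q], of "- l" "(F ^^ n) x"]
        circle_lift_displacement_lt[OF Fq[of q], of "- l" "(F ^^ n) x"] ne[OF 3(1), of "- l"] 3(2)
      by (cases "real q * \<rho> < - of_int l") (auto simp: algebra_simps)
  qed
qed

section \<open>Dense orbits of minimal lifts\<close>

definition periodic_set :: "real set \<Rightarrow> bool" where
  "periodic_set A \<longleftrightarrow> (\<forall>x. x \<in> A \<longleftrightarrow> x + 1 \<in> A)"

lemma periodic_set_add_int:
  assumes "periodic_set A"
  shows "x + of_int k \<in> A \<longleftrightarrow> x \<in> A"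
proof (induction k rule: int_induct[where k = 0])
  case (step1 i)
  have "x + of_int (i + 1) = (x + of_int i) + 1"
    by simp
  then show ?case
    using assms step1 unfolding periodic_set_def by metis
next
  case (step2 i)
  have "x + of_int i = (x + of_int (i - 1)) + 1"
    by simp
  then show ?case
    using assms step2 unfolding periodic_set_def by metis
qed simp

lemma periodic_set_closure:
  assumes "periodic_set A"
  shows "periodic_set (closure A)"
proof -
  have shift: "(+) 1 ` S = S \<longleftrightarrow> periodic_set S" for S :: "real set"
  proof
    assume "(+) 1 ` S = S"
    then show "periodic_set S"
      unfolding periodic_set_def by (metis add.commute add_left_imp_eq image_iff)
  next
    assume "periodic_set S"
    then have "y \<in> S \<longleftrightarrow> y \<in> (+) 1 ` S" for y
      unfolding periodic_set_def image_iff by (metis add.commute diff_add_cancel)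
    then show "(+) 1 ` S = S"
      by blast
  qed
  show ?thesis
    using closure_translation[of 1 A] assms unfolding shift[symmetric] by simp
qed

lemma periodic_set_circle_lift_image:
  assumes G: "circle_lift G" and A: "periodic_set A"
  shows "periodic_set (G ` A)"
  unfolding periodic_set_def
proof (intro allI iffI)
  have G1: "G (a + 1) = G a + 1" for a
    using G unfolding circle_lift_def by blast
  fix y
  show "y + 1 \<in> G ` A" if y: "y \<in> G ` A"
  proof -
    obtain a where "a \<in> A" "y = G a"
      using y by blast
    then show ?thesis
      using A G1[of a] unfolding periodic_set_def by (metis image_eqI)
  qed
  show "y \<in> G ` A" if y1: "y + 1 \<in> G ` A"
  proof -
    obtain a where "a \<in> A" "y + 1 = G a"
      using y1 by blast
    moreover have "a - 1 \<in> A"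
      using \<open>a \<in> A\<close> A unfolding periodic_set_def by (metis diff_add_cancel)
    moreover have "G (a - 1) = G a - 1"
      using G1[of "a - 1"] by simp
    ultimately show ?thesis
      by (metis add_diff_cancel image_eqI)
  qed
qed

lemma closed_circle_lift_image:
  assumes G: "circle_lift G" and "closed A"
  shows "closed (G ` A)"
proof -
  have inj: "inj G"
    using circle_lift_strict_mono[OF G] strict_mono_imp_inj_on by blast
  have "surj G"
    using circle_lift_surj[OF G] by (metis surj_def)
  then have bij: "bij G"
    using inj by (simp add: bij_def)
  have "isCont (inv G) y" for y
  proof -
    obtain x where "G x = y"
      using circle_lift_surj[OF G] by blast
    moreover have "isCont (inv G) (G x)"
      by (rule isCont_inverse_function[where d = 1]) (simp_all add: inv_f_f[OF inj] circle_lift_isCont[OF G])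
    ultimately show ?thesis by simp
  qed
  moreover have "G ` A = inv G -` A"
    using bij by (simp add: bij_vimage_eq_inv_image bij_imp_bij_inv inv_inv_eq)
  ultimately show ?thesis
    using continuous_closed_vimage[OF \<open>closed A\<close>, of "inv G"] by simp
qed

lemma periodic_decseq_Inter_nonempty:
  assumes closed: "\<And>k. closed (A k)" and periodic: "\<And>k. periodic_set (A k)"
    and nonempty: "\<And>k. A k \<noteq> {}" and "decseq A"
  shows "\<Inter> (range A) \<noteq> {}"
proof -
  have "A k \<inter> {0..1} \<noteq> {}" for k
  proof -
    obtain x where "x \<in> A k"
      using nonempty by blast
    then have "x + of_int (- \<lfloor>x\<rfloor>) \<in> A k"
      using periodic_set_add_int[OF periodic[of k]] by blast
    moreover have "x + of_int (- \<lfloor>x\<rfloor>) \<in> {0..1}"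
      by simp linarith
    ultimately show ?thesis by blast
  qed
  moreover have "compact (A k \<inter> {0..1})" for k
    using closed_Int_compact[OF closed[of k] compact_Icc] .
  moreover have "A n \<inter> {0..1} \<subseteq> A m \<inter> {0..1}" if "m \<le> n" for m n
    using decseqD[OF \<open>decseq A\<close> that] by blast
  ultimately have "\<Inter> (range (\<lambda>k. A k \<inter> {0..1})) \<noteq> {}"
    using compact_nest[of "\<lambda>k. A k \<inter> {0..1}"] by blast
  then show ?thesis by blast
qed

text \<open>Minimality is applied to the intersection of the forward images of \<open>A\<close>, which is
  invariant (not merely forward invariant) and nonempty by compactness.\<close>

lemma circle_minimal_forward_invariant_eq_UNIV:
  assumes F: "circle_lift F" and minimal: "circle_minimal F"
    and "closed A" and "periodic_set A" and "A \<noteq> {}" and "F ` A \<subseteq> A"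
  shows "A = UNIV"
proof -
  define B where "B = (\<Inter>k. (F ^^ k) ` A)"
  have step: "(F ^^ Suc k) ` A \<subseteq> (F ^^ k) ` A" for k
  proof -
    have "(F ^^ Suc k) ` A = (F ^^ k) ` F ` A"
      by (simp only: funpow_Suc_right image_comp)
    then show ?thesis
      using \<open>F ` A \<subseteq> A\<close> by blast
  qed
  have dec: "decseq (\<lambda>k. (F ^^ k) ` A)"
    using step by (rule decseq_SucI)
  have closed_k: "closed ((F ^^ k) ` A)" for k
    using closed_circle_lift_image[OF circle_lift_funpow[OF F] \<open>closed A\<close>] .
  have periodic_k: "periodic_set ((F ^^ k) ` A)" for k
    using periodic_set_circle_lift_image[OF circle_lift_funpow[OF F] \<open>periodic_set A\<close>] .
  have "(F ^^ k) ` A \<noteq> {}" for k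
    using \<open>A \<noteq> {}\<close> by blast
  then have "B \<noteq> {}"
    unfolding B_def using periodic_decseq_Inter_nonempty[OF closed_k periodic_k _ dec] by blast
  moreover have "closed B"
    unfolding B_def using closed_k by blast
  moreover have "\<forall>y. y \<in> B \<longleftrightarrow> y + 1 \<in> B"
    unfolding B_def using periodic_k unfolding periodic_set_def by blast
  moreover have "F ` B = B"
  proof -
    have "inj F"
      using circle_lift_strict_mono[OF F] strict_mono_imp_inj_on by blast
    then have "F ` B = (\<Inter>k. F ` (F ^^ k) ` A)"
      unfolding B_def using image_INT[of F UNIV UNIV "\<lambda>k. (F ^^ k) ` A" 0] by simp
    also have "\<dots> = (\<Inter>k. (F ^^ Suc k) ` A)"
      by (simp add: image_comp)
    also have "\<dots> = B"
      unfolding B_def using decseq_SucD[OF dec] by blast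
    finally show ?thesis .
  qed
  ultimately have "B = UNIV"
    using minimal unfolding circle_minimal_def by blast
  moreover have "B \<subseteq> (F ^^ 0) ` A"
    unfolding B_def by blast
  ultimately show ?thesis
    by auto
qed

text \<open>The preimage in \<open>\<real>\<close> of the forward orbit of \<open>x\<close> in \<open>\<real>/\<int>\<close>.\<close>

definition lifted_orbit :: "(real \<Rightarrow> real) \<Rightarrow> real \<Rightarrow> real set" where
  "lifted_orbit F x = {(F ^^ i) x + of_int l |i l. True}"

lemma periodic_set_lifted_orbit: "periodic_set (lifted_orbit F x)"
  unfolding periodic_set_def
proof (intro allI iffI)
  fix y
  assume "y \<in> lifted_orbit F x"
  then obtain i l where "y + 1 = (F ^^ i) x + of_int (l + 1)"
    unfolding lifted_orbit_def by force
  then show "y + 1 \<in> lifted_orbit F x"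
    unfolding lifted_orbit_def by blast
next
  fix y
  assume "y + 1 \<in> lifted_orbit F x"
  then obtain i l where "y = (F ^^ i) x + of_int (l - 1)"
    unfolding lifted_orbit_def by (force simp: algebra_simps)
  then show "y \<in> lifted_orbit F x"
    unfolding lifted_orbit_def by blast
qed

lemma circle_lift_image_lifted_orbit:
  assumes "circle_lift F"
  shows "F ` lifted_orbit F x \<subseteq> lifted_orbit F x"
proof
  fix z
  assume "z \<in> F ` lifted_orbit F x"
  then obtain i l where "z = F ((F ^^ i) x + of_int l)"
    unfolding lifted_orbit_def by blast
  then have "z = (F ^^ Suc i) x + of_int l"
    using circle_lift_add_int[OF assms] by simp
  then show "z \<in> lifted_orbit F x"
    unfolding lifted_orbit_def by blast
qed

lemma closure_lifted_orbit_eq_UNIV: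
  assumes F: "circle_lift F" and minimal: "circle_minimal F"
  shows "closure (lifted_orbit F x) = UNIV"
proof (rule circle_minimal_forward_invariant_eq_UNIV[OF F minimal])
  show "F ` closure (lifted_orbit F x) \<subseteq> closure (lifted_orbit F x)"
    using F circle_lift_image_lifted_orbit[OF F] closure_subset
    by (intro image_closure_subset) (auto simp: circle_lift_def intro: continuous_on_subset)
  have "(F ^^ 0) x + of_int 0 \<in> lifted_orbit F x"
    unfolding lifted_orbit_def by blast
  then show "closure (lifted_orbit F x) \<noteq> {}"
    using closure_subset by auto
  show "periodic_set (closure (lifted_orbit F x))"
    using periodic_set_closure[OF periodic_set_lifted_orbit] .
qed simp

lemma open_lifted_orbit_window:
  assumes F: "circle_lift F"
  shows "open {(x, y). \<exists>i\<le>N. \<exists>l::int. y - e < (F ^^ i) x + of_int l \<and> (F ^^ i) x + of_int l < y}"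
proof -
  have "{(x, y). \<exists>i\<le>N. \<exists>l::int. y - e < (F ^^ i) x + of_int l \<and> (F ^^ i) x + of_int l < y}
      = (\<Union>i\<le>N. \<Union>l::int. {z. snd z - e < (F ^^ i) (fst z) + of_int l}
                          \<inter> {z. (F ^^ i) (fst z) + of_int l < snd z})"
    by (auto; blast)
  moreover have "continuous_on UNIV (\<lambda>z. (F ^^ i) (fst z) :: real)" for i
    using circle_lift_funpow[OF F, of i] unfolding circle_lift_def
    by (auto intro: continuous_on_compose2[OF _ continuous_on_fst[OF continuous_on_id]])
  then have "open {z. snd z - e < (F ^^ i) (fst z) + of_int l}"
    and "open {z. (F ^^ i) (fst z) + of_int l < snd z}" for i l
    by (auto intro!: open_Collect_less continuous_intros)
  ultimately show ?thesis
    by (simp add: open_Int open_UN)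
qed

lemma lifted_orbit_uniformly_dense:
  assumes F: "circle_lift F" and dense: "\<And>x. closure (lifted_orbit F x) = UNIV" and "e > 0"
  shows "\<exists>N. \<forall>x y. \<exists>i\<le>N. \<exists>l::int. y - e < (F ^^ i) x + of_int l \<and> (F ^^ i) x + of_int l < y"
proof -
  define U where "U N = {(x, y). \<exists>i\<le>N. \<exists>l::int. y - e < (F ^^ i) x + of_int l \<and> (F ^^ i) x + of_int l < y}"
    for N
  have "open (U N)" for N
    unfolding U_def by (rule open_lifted_orbit_window[OF F])
  moreover have "U m \<subseteq> U n" if "m \<le> n" for m n
    unfolding U_def using that by clarsimp (meson le_trans)
  moreover have "{0..1} \<times> {0..1} \<subseteq> (\<Union>N. U N)"
  proof clarify
    fix x y :: real
    have "{y - e <..< y} \<inter> lifted_orbit F x \<noteq> {}"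
      using open_Int_closure_eq_empty[of "{y - e <..< y}" "lifted_orbit F x"] dense \<open>e > 0\<close> by auto
    then obtain i l where "y - e < (F ^^ i) x + of_int l" "(F ^^ i) x + of_int l < y"
      unfolding lifted_orbit_def by auto
    then have "(x, y) \<in> U i"
      unfolding U_def by blast
    then show "(x, y) \<in> (\<Union>N. U N)"
      by blast
  qed
  ultimately obtain N where N: "{0..1} \<times> {0..1} \<subseteq> U N"
    using compact_subset_incseq_open[of "{0..1} \<times> {0..1}" U] by (auto simp: compact_Times)
  have "\<exists>i\<le>N. \<exists>l::int. y - e < (F ^^ i) x + of_int l \<and> (F ^^ i) x + of_int l < y" for x y
  proof -
    have unit: "t - of_int \<lfloor>t\<rfloor> \<in> {0..1}" for t :: real
      by simp linarith
    then have "(x - of_int \<lfloor>x\<rfloor>, y - of_int \<lfloor>y\<rfloor>) \<in> U N"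
      using N unit[of x] unit[of y] by blast
    then obtain i l where "i \<le> N"
      and "y - of_int \<lfloor>y\<rfloor> - e < (F ^^ i) x - of_int \<lfloor>x\<rfloor> + of_int l"
      and "(F ^^ i) x - of_int \<lfloor>x\<rfloor> + of_int l < y - of_int \<lfloor>y\<rfloor>"
      by (auto simp: U_def circle_lift_diff_int[OF circle_lift_funpow[OF F]])
    then show ?thesis
      by (intro exI[of _ i] conjI exI[of _ "l - \<lfloor>x\<rfloor> + \<lfloor>y\<rfloor>"]) auto
  qed
  then show ?thesis
    by blast
qed

section \<open>Orbits of nearby lifts with the same rotation number\<close>

lemma funpow_uniformly_close:
  fixes F :: "real \<Rightarrow> real"
  assumes uc: "uniformly_continuous_on UNIV F" and "e > 0"
  shows "\<exists>\<delta>>0. \<forall>G. (\<forall>x. \<bar>G x - F x\<bar> < \<delta>) \<longrightarrow> (\<forall>i\<le>N. \<forall>x. \<bar>(G ^^ i) x - (F ^^ i) x\<bar> < e)"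
  using \<open>e > 0\<close>
proof (induction N arbitrary: e)
  case 0
  then show ?case by auto
next
  case (Suc N)
  obtain d where "d > 0" and d: "\<And>a b. \<bar>a - b\<bar> < d \<Longrightarrow> \<bar>F a - F b\<bar> < e / 2"
    using uc \<open>e > 0\<close> unfolding uniformly_continuous_on_def dist_real_def
    by (metis UNIV_I abs_minus_commute half_gt_zero)
  obtain \<delta> where "\<delta> > 0"
    and \<delta>: "\<And>G. \<forall>x. \<bar>G x - F x\<bar> < \<delta> \<Longrightarrow> \<forall>i\<le>N. \<forall>x. \<bar>(G ^^ i) x - (F ^^ i) x\<bar> < min d e"
    using Suc.IH[of "min d e"] \<open>d > 0\<close> \<open>e > 0\<close> by auto
  have "\<bar>(G ^^ i) x - (F ^^ i) x\<bar> < e"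
    if G: "\<forall>x. \<bar>G x - F x\<bar> < min \<delta> (e / 2)" and "i \<le> Suc N" for G i x
  proof -
    have GN: "\<forall>i\<le>N. \<forall>x. \<bar>(G ^^ i) x - (F ^^ i) x\<bar> < min d e"
      using \<delta> G by simp
    show ?thesis
    proof (cases "i \<le> N")
      case True
      then show ?thesis using GN by fastforce
    next
      case False
      then have "i = Suc N"
        using \<open>i \<le> Suc N\<close> by simp
      have "\<bar>G ((G ^^ N) x) - F ((G ^^ N) x)\<bar> < e / 2"
        using G by fastforce
      moreover have "\<bar>F ((G ^^ N) x) - F ((F ^^ N) x)\<bar> < e / 2"
        using d GN by fastforce
      ultimately show ?thesis
        using abs_triangle_ineq[of "G ((G ^^ N) x) - F ((G ^^ N) x)" "F ((G ^^ N) x) - F ((F ^^ N) x)"]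
        unfolding \<open>i = Suc N\<close> by simp
    qed
  qed
  then show ?case
    using \<open>\<delta> > 0\<close> \<open>e > 0\<close> by (intro exI[of _ "min \<delta> (e / 2)"]) auto
qed

lemma funpow_close_of_same_rotation:
  assumes F: "circle_lift F" "is_rot_num F \<rho>" and G: "circle_lift G" "is_rot_num G \<rho>"
    and irr: "\<rho> \<notin> \<rat>"
    and dense: "\<forall>x y. \<exists>i\<le>N. \<exists>l::int. y - e < (F ^^ i) x + of_int l \<and> (F ^^ i) x + of_int l < y"
    and close: "\<forall>i\<le>N. \<forall>x. \<bar>(G ^^ i) x - (F ^^ i) x\<bar> < e"
  shows "\<bar>(G ^^ n) x - (F ^^ n) x\<bar> < 2 * e"
proof -
  have same_order: "(G ^^ n) x < (G ^^ i) x + of_int l \<longleftrightarrow> (F ^^ n) x < (F ^^ i) x + of_int l" for i l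
    using funpow_order_eq_rotation_order[OF F irr] funpow_order_eq_rotation_order[OF G irr] by simp
  obtain i l where i: "i \<le> N" "(F ^^ n) x - e < (F ^^ i) x + of_int l" "(F ^^ i) x + of_int l < (F ^^ n) x"
    using dense by blast
  have "\<bar>(G ^^ i) x - (F ^^ i) x\<bar> < e"
    using close i(1) by blast
  then have lower: "(F ^^ n) x - 2 * e < (G ^^ n) x"
    using same_order[of i l] i by linarith
  obtain j m where j: "j \<le> N" "(F ^^ n) x < (F ^^ j) x + of_int m" "(F ^^ j) x + of_int m < (F ^^ n) x + e"
    using dense[rule_format, of "(F ^^ n) x + e" x] by auto
  have "\<bar>(G ^^ j) x - (F ^^ j) x\<bar> < e"
    using close j(1) by blast
  then have upper: "(G ^^ n) x < (F ^^ n) x + 2 * e"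
    using same_order[of j m] j by linarith
  show ?thesis
    using lower upper by linarith
qed

lemma orbits_uniformly_close:
  assumes F: "circle_lift F" "circle_minimal F" and \<rho>: "is_rot_num F \<rho>" and irr: "\<rho> \<notin> \<rat>"
    and "e > 0"
  shows "\<exists>\<delta>>0. \<forall>G. circle_lift G \<and> is_rot_num G \<rho> \<and> (\<forall>x. \<bar>G x - F x\<bar> < \<delta>)
           \<longrightarrow> (\<forall>n x. \<bar>(G ^^ n) x - (F ^^ n) x\<bar> < e)"
proof -
  obtain N where dense: "\<forall>x y. \<exists>i\<le>N. \<exists>l::int. y - e / 2 < (F ^^ i) x + of_int l \<and> (F ^^ i) x + of_int l < y"
    using lifted_orbit_uniformly_dense[OF F(1) closure_lifted_orbit_eq_UNIV[OF F] half_gt_zero[OF \<open>e > 0\<close>]]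
    by blast
  obtain \<delta> where "\<delta> > 0"
    and \<delta>: "\<forall>G. (\<forall>x. \<bar>G x - F x\<bar> < \<delta>) \<longrightarrow> (\<forall>i\<le>N. \<forall>x. \<bar>(G ^^ i) x - (F ^^ i) x\<bar> < e / 2)"
    using funpow_uniformly_close[OF circle_lift_uniformly_continuous[OF F(1)], of "e / 2" N] \<open>e > 0\<close> by auto
  have "\<bar>(G ^^ n) x - (F ^^ n) x\<bar> < e"
    if "circle_lift G" "is_rot_num G \<rho>" "\<forall>x. \<bar>G x - F x\<bar> < \<delta>" for G n x
    using funpow_close_of_same_rotation[OF F(1) \<rho> that(1,2) irr dense, of n x] \<delta> that(3) by simp
  then show ?thesis
    using \<open>\<delta> > 0\<close> by blast
qed

lemma displacements_uniformly_close:
  assumes F: "circle_lift F" "circle_minimal F" and \<rho>: "is_rot_num F \<rho>" and irr: "\<rho> \<notin> \<rat>"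
    and "e > 0"
  shows "\<exists>\<delta>>0. \<forall>G. circle_lift G \<and> is_rot_num G \<rho> \<and> (\<forall>x. \<bar>G x - F x\<bar> < \<delta>)
           \<longrightarrow> (\<forall>m x. \<bar>(G ((G ^^ m) x) - (G ^^ m) x) - (F ((F ^^ m) x) - (F ^^ m) x)\<bar> < e)"
proof -
  obtain \<beta> where "\<beta> > 0" and \<beta>: "\<And>a b. \<bar>a - b\<bar> < \<beta> \<Longrightarrow> \<bar>F a - F b\<bar> < e / 2"
    using circle_lift_uniformly_continuous[OF F(1)] \<open>e > 0\<close>
    unfolding uniformly_continuous_on_def dist_real_def by (metis UNIV_I half_gt_zero)
  obtain \<delta> where "\<delta> > 0" and \<delta>: "\<And>G. circle_lift G \<and> is_rot_num G \<rho> \<and> (\<forall>x. \<bar>G x - F x\<bar> < \<delta>)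
      \<Longrightarrow> \<forall>n x. \<bar>(G ^^ n) x - (F ^^ n) x\<bar> < min \<beta> (e / 4)"
    using orbits_uniformly_close[OF F \<rho> irr, of "min \<beta> (e / 4)"] \<open>\<beta> > 0\<close> \<open>e > 0\<close> by auto
  have "\<bar>(G b - b) - (F a - a)\<bar> < e"
    if G: "circle_lift G" "is_rot_num G \<rho>" and close: "\<forall>x. \<bar>G x - F x\<bar> < min \<delta> (e / 4)"
      and "a = (F ^^ m) x" "b = (G ^^ m) x" for G m x a b
  proof -
    have "\<bar>b - a\<bar> < \<beta>" and ba: "\<bar>b - a\<bar> < e / 4"
      using \<delta>[of G] G close \<open>a = (F ^^ m) x\<close> \<open>b = (G ^^ m) x\<close> by simp_all
    then have "\<bar>F b - F a\<bar> < e / 2"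
      using \<beta> by simp
    moreover have "\<bar>G b - F b\<bar> < e / 4"
      using close by simp
    ultimately show ?thesis
      using ba unfolding abs_less_iff by (intro conjI; linarith)
  qed
  then show ?thesis
    using \<open>\<delta> > 0\<close> \<open>e > 0\<close> by (intro exI[of _ "min \<delta> (e / 4)"]) auto
qed

lemma curv_radius_Suc:
  "curv_radius F x0 (Suc m) = 1/2 * \<bar>1 / sin (pi * (F ((F ^^ m) x0) - (F ^^ m) x0))\<bar>"
  by (simp add: curv_radius_def)

lemma curv_radius_minus_int:
  assumes "circle_lift F"
  shows "curv_radius (\<lambda>x. F x - of_int k) x0 n = curv_radius F x0 n"
proof (cases n)
  case 0
  then show ?thesis by (simp add: curv_radius_def)
next
  case (Suc m)
  have eq: "F (((\<lambda>x. F x - of_int k) ^^ m) x0) - of_int k - ((\<lambda>x. F x - of_int k) ^^ m) x0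
        = (F ((F ^^ m) x0) - (F ^^ m) x0) - of_int k"
    unfolding funpow_minus_int[OF assms]
    using circle_lift_diff_int[OF assms, of "(F ^^ m) x0" "int m * k"] by simp
  show ?thesis
    unfolding Suc curv_radius_Suc eq abs_divide abs_sin_pi_diff_int ..
qed

lemma curv_radius_stable:
  assumes F: "circle_lift F" "circle_minimal F" and \<rho>: "is_rot_num F \<rho>" and irr: "\<rho> \<notin> \<rat>"
    and "\<epsilon> > 0"
  shows "\<exists>\<delta>>0. \<forall>G. circle_lift G \<and> is_rot_num G \<rho> \<and> (\<forall>x. \<bar>G x - F x\<bar> < \<delta>)
           \<longrightarrow> (\<forall>x0 n. \<bar>curv_radius F x0 n - curv_radius G x0 n\<bar> < \<epsilon>)"
proof -
  define p where "p = \<lfloor>\<rho>\<rfloor>"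
  have "\<rho> \<notin> \<int>"
    using irr Ints_subset_Rats by blast
  then obtain \<eta> where "\<eta> > 0" and \<eta>: "\<And>y. of_int p + \<eta> \<le> F y - y \<and> F y - y \<le> of_int p + 1 - \<eta>"
    using circle_lift_displacement_bounds[OF F(1) \<rho>] not_Ints_floor_bounds unfolding p_def by blast
  define K where "K = {of_int p + \<eta> / 2 .. of_int p + 1 - \<eta> / 2}"
  define f where "f t = 1/2 * \<bar>1 / sin (pi * t)\<bar>" for t
  have "uniformly_continuous_on K f"
    unfolding K_def f_def using \<open>\<eta> > 0\<close> by (intro uniformly_continuous_on_half_abs_cosec[of p]) auto
  then obtain \<gamma> where "\<gamma> > 0" and \<gamma>: "\<And>s t. s \<in> K \<Longrightarrow> t \<in> K \<Longrightarrow> \<bar>s - t\<bar> < \<gamma> \<Longrightarrow> \<bar>f s - f t\<bar> < \<epsilon>"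
    using \<open>\<epsilon> > 0\<close> unfolding uniformly_continuous_on_def dist_real_def by metis
  obtain \<delta> where "\<delta> > 0" and \<delta>: "\<And>G. circle_lift G \<and> is_rot_num G \<rho> \<and> (\<forall>x. \<bar>G x - F x\<bar> < \<delta>)
      \<Longrightarrow> \<forall>m x. \<bar>(G ((G ^^ m) x) - (G ^^ m) x) - (F ((F ^^ m) x) - (F ^^ m) x)\<bar> < min \<gamma> (\<eta> / 2)"
    using displacements_uniformly_close[OF F \<rho> irr, of "min \<gamma> (\<eta> / 2)"] \<open>\<gamma> > 0\<close> \<open>\<eta> > 0\<close> by auto
  have "\<bar>curv_radius F x0 n - curv_radius G x0 n\<bar> < \<epsilon>"
    if G: "circle_lift G" "is_rot_num G \<rho>" "\<forall>x. \<bar>G x - F x\<bar> < \<delta>" for G x0 n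
  proof (cases n)
    case 0
    \<comment> \<open>\<open>n - 1\<close> truncates to \<open>0\<close> and \<open>1 / 0 = 0\<close>, so both radii vanish\<close>
    then show ?thesis
      using \<open>\<epsilon> > 0\<close> by (simp add: curv_radius_def)
  next
    case (Suc m)
    define s where "s = F ((F ^^ m) x0) - (F ^^ m) x0"
    define t where "t = G ((G ^^ m) x0) - (G ^^ m) x0"
    have "\<bar>t - s\<bar> < \<gamma>" "\<bar>t - s\<bar> < \<eta> / 2"
      using \<delta>[of G] G unfolding s_def t_def by simp_all
    moreover have "of_int p + \<eta> \<le> s" "s \<le> of_int p + 1 - \<eta>"
      using \<eta> unfolding s_def by simp_all
    ultimately have "s \<in> K" "t \<in> K" "\<bar>s - t\<bar> < \<gamma>"
      unfolding K_def atLeastAtMost_iff abs_less_iff by (intro conjI; linarith)+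
    then have "\<bar>f s - f t\<bar> < \<epsilon>"
      by (rule \<gamma>)
    then show ?thesis
      unfolding Suc curv_radius_Suc f_def s_def t_def .
  qed
  then show ?thesis
    using \<open>\<delta> > 0\<close> by blast
qed

section \<open>Normalisation modulo one\<close>

lemma circ_dist_close_imp_int_translate_close:
  assumes F: "circle_lift F" and G: "circle_lift G"
    and close: "\<And>x. circ_dist (G x) (F x) < \<delta>" and "\<delta> \<le> 1/2"
  shows "\<exists>k::int. \<forall>x. \<bar>G x - of_int k - F x\<bar> < \<delta>"
proof -
  define g where "g x = G x - F x" for x
  have cont: "isCont g x" for x
    unfolding g_def using circle_lift_isCont[OF G] circle_lift_isCont[OF F] by (rule isCont_diff)
  have near: "\<bar>g x - of_int (round (g x))\<bar> < \<delta>" for x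
    using close[of x] unfolding g_def circ_dist_def by simp
  then have "\<bar>g x - of_int (round (g x))\<bar> < 1/2" for x
    using \<open>\<delta> \<le> 1/2\<close> by (meson order.strict_trans2)
  then have const: "round (g x) = round (g 0)" for x
    using continuous_round_constant[of g, OF cont] by blast
  have "\<bar>G x - of_int (round (g 0)) - F x\<bar> < \<delta>" for x
    using near[of x] unfolding const[of x] unfolding g_def by (simp add: algebra_simps)
  then show ?thesis
    by blast
qed

lemma int_translate_close_same_rot_num:
  assumes \<Phi>: "circle_lift \<Phi>" and \<rho>: "is_rot_num \<Phi> \<rho>" and "\<rho> \<notin> \<int>"
  shows "\<exists>\<eta>>0. \<forall>\<Psi> \<delta>. circle_lift \<Psi> \<and> rot_num \<Psi> - \<rho> \<in> \<int> \<and> (\<forall>x. circ_dist (\<Psi> x) (\<Phi> x) < \<delta>) \<and> \<delta> \<le> \<eta>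
           \<longrightarrow> (\<exists>k::int. is_rot_num (\<lambda>x. \<Psi> x - of_int k) \<rho> \<and> (\<forall>x. \<bar>\<Psi> x - of_int k - \<Phi> x\<bar> < \<delta>))"
proof -
  define p where "p = \<lfloor>\<rho>\<rfloor>"
  have p: "of_int p < \<rho>" "\<rho> < of_int p + 1"
    using not_Ints_floor_bounds[OF \<open>\<rho> \<notin> \<int>\<close>] unfolding p_def by simp_all
  then obtain \<eta> where "\<eta> > 0" and \<eta>: "\<And>y. of_int p + \<eta> \<le> \<Phi> y - y \<and> \<Phi> y - y \<le> of_int p + 1 - \<eta>"
    using circle_lift_displacement_bounds[OF \<Phi> \<rho>] by blast
  have "\<exists>k::int. is_rot_num (\<lambda>x. \<Psi> x - of_int k) \<rho> \<and> (\<forall>x. \<bar>\<Psi> x - of_int k - \<Phi> x\<bar> < \<delta>)"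
    if \<Psi>: "circle_lift \<Psi>" "rot_num \<Psi> - \<rho> \<in> \<int>" and close: "\<forall>x. circ_dist (\<Psi> x) (\<Phi> x) < \<delta>"
      and "\<delta> \<le> min \<eta> (1/2)" for \<Psi> \<delta>
  proof -
    obtain k where k: "\<And>x. \<bar>\<Psi> x - of_int k - \<Phi> x\<bar> < \<delta>"
      using circ_dist_close_imp_int_translate_close[OF \<Phi> \<Psi>(1), of \<delta>] close \<open>\<delta> \<le> min \<eta> (1/2)\<close> by auto
    have rot: "is_rot_num (\<lambda>x. \<Psi> x - of_int k) (rot_num \<Psi> - of_int k)"
      using is_rot_num_minus_int[OF \<Psi>(1) is_rot_num_rot_num[OF \<Psi>(1)]] .
    have "rot_num \<Psi> - of_int k = \<rho>"
    proof (rule is_rot_num_eq_of_int_diff[OF rot _ p])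
      show "rot_num \<Psi> - of_int k - \<rho> \<in> \<int>"
        using Ints_diff[OF \<Psi>(2) Ints_of_int[of k]] by (simp add: algebra_simps)
      show "of_int p \<le> \<Psi> y - of_int k - y" "\<Psi> y - of_int k - y \<le> of_int p + 1" for y
        using k[of y] \<eta>[of y] \<open>\<delta> \<le> min \<eta> (1/2)\<close> unfolding abs_less_iff by linarith+
    qed
    then show ?thesis
      using rot k by auto
  qed
  then show ?thesis
    using \<open>\<eta> > 0\<close> by (intro exI[of _ "min \<eta> (1/2)"]) auto
qed

theorem proposition5p7:
  fixes \<Phi> :: "real \<Rightarrow> real" and \<epsilon> :: real
  assumes "circle_lift \<Phi>" and "circle_minimal \<Phi>"
    and "rot_num \<Phi> \<notin> \<rat>"
    and "\<epsilon> > 0"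
  shows "\<exists>\<delta>>0. \<forall>\<Psi>. circle_lift \<Psi> \<and> circle_minimal \<Psi>
           \<and> (\<forall>x. circ_dist (\<Psi> x) (\<Phi> x) < \<delta>)
           \<and> rot_num \<Psi> - rot_num \<Phi> \<in> \<int>
         \<longrightarrow> (\<exists>c<\<epsilon>. \<forall>x0. \<forall>n\<ge>1. \<bar>curv_radius \<Phi> x0 n - curv_radius \<Psi> x0 n\<bar> \<le> c)"
proof -
  let ?\<rho> = "rot_num \<Phi>"
  have \<rho>: "is_rot_num \<Phi> ?\<rho>"
    using is_rot_num_rot_num[OF assms(1)] .
  have "?\<rho> \<notin> \<int>"
    using assms(3) Ints_subset_Rats by blast
  obtain \<eta> where "\<eta> > 0" and normalize: "\<And>\<Psi> \<delta>. circle_lift \<Psi> \<and> rot_num \<Psi> - ?\<rho> \<in> \<int>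
      \<and> (\<forall>x. circ_dist (\<Psi> x) (\<Phi> x) < \<delta>) \<and> \<delta> \<le> \<eta>
      \<Longrightarrow> \<exists>k::int. is_rot_num (\<lambda>x. \<Psi> x - of_int k) ?\<rho> \<and> (\<forall>x. \<bar>\<Psi> x - of_int k - \<Phi> x\<bar> < \<delta>)"
    using int_translate_close_same_rot_num[OF assms(1) \<rho> \<open>?\<rho> \<notin> \<int>\<close>] by blast
  obtain \<delta> where "\<delta> > 0" and stable: "\<And>\<Psi>. circle_lift \<Psi> \<and> is_rot_num \<Psi> ?\<rho> \<and> (\<forall>x. \<bar>\<Psi> x - \<Phi> x\<bar> < \<delta>)
      \<Longrightarrow> \<forall>x0 n. \<bar>curv_radius \<Phi> x0 n - curv_radius \<Psi> x0 n\<bar> < \<epsilon> / 2"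
    using curv_radius_stable[OF assms(1,2) \<rho> assms(3), of "\<epsilon> / 2"] \<open>\<epsilon> > 0\<close> by auto
  have "\<bar>curv_radius \<Phi> x0 n - curv_radius \<Psi> x0 n\<bar> < \<epsilon> / 2"
    if \<Psi>: "circle_lift \<Psi>" "\<forall>x. circ_dist (\<Psi> x) (\<Phi> x) < min \<delta> \<eta>" "rot_num \<Psi> - ?\<rho> \<in> \<int>" for \<Psi> x0 n
  proof -
    obtain k where "is_rot_num (\<lambda>x. \<Psi> x - of_int k) ?\<rho>" "\<forall>x. \<bar>\<Psi> x - of_int k - \<Phi> x\<bar> < min \<delta> \<eta>"
      using normalize[of \<Psi> "min \<delta> \<eta>"] \<Psi> by auto
    then have "\<bar>curv_radius \<Phi> x0 n - curv_radius (\<lambda>x. \<Psi> x - of_int k) x0 n\<bar> < \<epsilon> / 2"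
      using stable circle_lift_minus_int[OF \<Psi>(1)] by simp
    then show ?thesis
      unfolding curv_radius_minus_int[OF \<Psi>(1)] .
  qed
  then show ?thesis
    using \<open>\<delta> > 0\<close> \<open>\<eta> > 0\<close> \<open>\<epsilon> > 0\<close>
    by (intro exI[of _ "min \<delta> \<eta>"] conjI allI impI exI[of _ "\<epsilon> / 2"]) (auto intro: less_imp_le)
qed

end
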